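(* Let $\mathcal{C}$ be a binary linear code of length $n$ with BPSK images $\underline s=(1-2c_0,\dots,1-2c_{n-1})$ of codewords $\underline c$. Let $\underline c^{(0)}$ be the all-zero codeword, and let $\underline c^{(1)},\underline c$ be codewords such that $\underline c^{(0)},\underline c^{(1)},\underline c$ are pairwise distinct, with $d_1=W_H(\underline c^{(1)})$, $i=W_H(\underline c)$, $j=W_H(\underline c-\underline c^{(1)})$. Suppose $\underline s^{(0)}$ is transmitted over the AWGN channel, $\underline y=\underline s^{(0)}+\underline z$ with $\underline z$ having i.i.d. $\mathcal{N}(0,\sigma^2)$ components, $\sigma>0$. Then $$p_3(i,j):={\rm Pr}\big\{(\underline s^{(0)}\to\underline s^{(1)})\cup(\underline s^{(0)}\to\underline s)\big\}=1-\iint_{\Omega}f(\xi_1)f(\xi_2)\,d\xi_1\,d\xi_2,$$ where $f(x)=\frac{1}{\sqrt{2\pi}\sigma}e^{-x^2/(2\sigma^2)}$, $\Omega=\{(\xi_1,\xi_2)\in\mathbb{R}^2:\ \xi_1<\sqrt{d_1},\ \xi_1\cos\theta+\xi_2\sin\theta<\sqrt{i}\}$, and $\theta\in[0,\pi]$ is given by $\cos\theta=(d_1+i-j)/(2\sqrt{d_1 i})$. In particular this probability depends only on $(d_1,i,j)$ and $\sigma$.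
   Context: $W_H$ denotes Hamming weight. For bipolar codewords $\underline s^{(0)},\underline s$, the event $\{\underline s^{(0)}\to\underline s\}$ is $\{\underline y:\|\underline y-\underline s\|\le\|\underline y-\underline s^{(0)}\|\}$ (Euclidean norm in $\mathbb{R}^n$). *)

theory Defs
  imports "HOL-Probability.Probability"
begin

text \<open>Binary words of length n are bool lists (True = bit 1).
  A binary linear code of length n: a GF(2)-subspace of the words of length n.\<close>

definition binary_linear_code :: "nat \<Rightarrow> bool list set \<Rightarrow> bool" where
  "binary_linear_code n C \<longleftrightarrow> C \<subseteq> {c. length c = n} \<and> replicate n False \<in> C \<and>
     (\<forall>a\<in>C. \<forall>b\<in>C. map2 (\<noteq>) a b \<in> C)"

definition gf2_diff :: "bool list \<Rightarrow> bool list \<Rightarrow> bool list" where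
  "gf2_diff a b = map2 (\<noteq>) a b"

definition hamming_weight :: "bool list \<Rightarrow> nat" where
  "hamming_weight c = card {k. k < length c \<and> c ! k}"

definition bpsk :: "bool list \<Rightarrow> nat \<Rightarrow> real" where
  "bpsk c k = 1 - 2 * of_bool (c ! k)"

definition awgn_noise :: "nat \<Rightarrow> real \<Rightarrow> (nat \<Rightarrow> real) measure" where
  "awgn_noise n \<sigma> = PiM {..<n} (\<lambda>_. density lborel (normal_density 0 \<sigma>))"

definition sqdist :: "nat \<Rightarrow> (nat \<Rightarrow> real) \<Rightarrow> (nat \<Rightarrow> real) \<Rightarrow> real" where
  "sqdist n u v = (\<Sum>k<n. (u k - v k)\<^sup>2)"

definition pw_error :: "nat \<Rightarrow> (nat \<Rightarrow> real) \<Rightarrow> (nat \<Rightarrow> real) \<Rightarrow> (nat \<Rightarrow> real) \<Rightarrow> bool" where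
  "pw_error n s0 s y \<longleftrightarrow> sqrt (sqdist n y s) \<le> sqrt (sqdist n y s0)"

definition gauss_pdf :: "real \<Rightarrow> real \<Rightarrow> real" where
  "gauss_pdf \<sigma> x = 1 / (sqrt (2 * pi) * \<sigma>) * exp (- x\<^sup>2 / (2 * \<sigma>\<^sup>2))"

end

theory Submission
  imports Defs
begin

text \<open>Let \<open>A\<close> and \<open>B\<close> be the supports of \<open>c1\<close> and \<open>c\<close>. Since \<open>s0\<close> is the all-ones word,
  the pairwise error event towards \<open>s\<close> is \<open>\<Sum>k\<in>B. z k \<le> -|B|\<close>, and likewise for \<open>A\<close>.
  The sums \<open>U, P, Q\<close> of the noise over \<open>A \<inter> B\<close>, \<open>A - B\<close> and \<open>B - A\<close> are independent
  centred normals with variances \<open>|A \<inter> B| \<sigma>\<^sup>2\<close>, \<open>|A - B| \<sigma>\<^sup>2\<close>, \<open>|B - A| \<sigma>\<^sup>2\<close>, and no error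
  occurs iff \<open>U + P > -|A|\<close> and \<open>U + Q > -|B|\<close>. Given \<open>U + P\<close>, the variable \<open>U + Q\<close> is a
  multiple of \<open>U + P\<close> plus independent normal noise (a Gaussian shear); rescaling both to
  variance \<open>\<sigma>\<^sup>2\<close> turns the event into \<open>\<Omega>\<close> with \<open>cos \<theta> = |A \<inter> B| / sqrt (|A| |B|)\<close>,
  which is the given value because \<open>W\<^sub>H(c - c1) = |A| + |B| - 2 |A \<inter> B|\<close>.\<close>

section \<open>Centred normal laws\<close>

text \<open>Parametrised by the variance; variance \<open>0\<close> gives the point mass at \<open>0\<close>, so that empty
  blocks of coordinates (e.g. \<open>A \<inter> B = {}\<close>) need no separate treatment.\<close>

definition centered_normal :: "real \<Rightarrow> real measure" where
  "centered_normal v =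
     (if v = 0 then return borel 0 else density lborel (\<lambda>x. ennreal (normal_density 0 (sqrt v) x)))"

lemma sets_centered_normal [measurable_cong, simp]: "sets (centered_normal v) = sets borel"
  by (simp add: centered_normal_def)

lemma space_centered_normal [simp]: "space (centered_normal v) = UNIV"
  by (simp add: centered_normal_def)

lemma prob_space_centered_normal: "prob_space (centered_normal v)"
proof (cases "v = 0")
  case True
  then show ?thesis by (simp add: centered_normal_def prob_space_return)
next
  case False
  have "normal_density 0 (sqrt v) = normal_density 0 \<bar>sqrt v\<bar>"
    by (simp add: normal_density_def fun_eq_iff)
  then show ?thesis
    using False prob_space_normal_density[of "\<bar>sqrt v\<bar>" 0] by (simp add: centered_normal_def)
qed

lemma emeasure_centered_normal_UNIV [simp]: "emeasure (centered_normal v) UNIV = 1"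
  using prob_space.emeasure_space_1[OF prob_space_centered_normal[of v]] by simp

lemma borel_measurable_nn_integral_centered_normal [measurable (raw)]:
  "case_prod f \<in> borel_measurable (N \<Otimes>\<^sub>M borel) \<Longrightarrow>
    (\<lambda>x. \<integral>\<^sup>+ y. f x y \<partial>centered_normal v) \<in> borel_measurable N"
  using sigma_finite_measure.borel_measurable_nn_integral[
      OF prob_space_imp_sigma_finite[OF prob_space_centered_normal[of v]], of f N]
  by (simp add: sets_pair_measure_cong[OF refl sets_centered_normal[of v]] cong: measurable_cong_sets)

lemma nn_integral_centered_normal_0:
  "g \<in> borel_measurable borel \<Longrightarrow> (\<integral>\<^sup>+x. g x \<partial>centered_normal 0) = g 0"
  by (simp add: centered_normal_def nn_integral_return)

lemma nn_integral_centered_normal: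
  "g \<in> borel_measurable borel \<Longrightarrow> v > 0 \<Longrightarrow>
    (\<integral>\<^sup>+x. g x \<partial>centered_normal v) = (\<integral>\<^sup>+x. ennreal (normal_density 0 (sqrt v) x) * g x \<partial>lborel)"
  by (simp add: centered_normal_def nn_integral_density)

lemma nn_integral_centered_normal_scale:
  assumes [measurable]: "g \<in> borel_measurable borel" and "v \<ge> 0"
  shows "(\<integral>\<^sup>+x. g (k * x) \<partial>centered_normal v) = (\<integral>\<^sup>+x. g x \<partial>centered_normal (k\<^sup>2 * v))"
proof (cases "k = 0 \<or> v = 0")
  case True
  then show ?thesis by (auto simp: nn_integral_centered_normal_0)
next
  case False
  then have k: "k \<noteq> 0" and v: "v > 0" using \<open>v \<ge> 0\<close> by auto
  let ?n = "\<lambda>v x. ennreal (normal_density 0 (sqrt v) x)"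
  have density: "ennreal \<bar>k\<bar> * ?n (k\<^sup>2 * v) (k * x) = ?n v x" for x
  proof -
    have "\<bar>k\<bar> * normal_density 0 (sqrt (k\<^sup>2 * v)) (k * x) = normal_density 0 (sqrt v) x"
      using k v by (simp add: normal_density_def real_sqrt_mult power_mult_distrib field_simps)
    then show ?thesis by (simp add: ennreal_mult'[symmetric])
  qed
  have "(\<integral>\<^sup>+x. g x \<partial>centered_normal (k\<^sup>2 * v)) = (\<integral>\<^sup>+x. ?n (k\<^sup>2 * v) x * g x \<partial>lborel)"
    using k v by (simp add: nn_integral_centered_normal)
  also have "\<dots> = ennreal \<bar>k\<bar> * (\<integral>\<^sup>+x. ?n (k\<^sup>2 * v) (0 + k * x) * g (0 + k * x) \<partial>lborel)"
    by (rule nn_integral_real_affine) (simp_all add: k)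
  also have "\<dots> = (\<integral>\<^sup>+x. ?n v x * g (k * x) \<partial>lborel)"
    by (simp add: nn_integral_cmult[symmetric] mult.assoc[symmetric] density)
  also have "\<dots> = (\<integral>\<^sup>+x. g (k * x) \<partial>centered_normal v)"
    using v by (simp add: nn_integral_centered_normal)
  finally show ?thesis ..
qed

lemma nn_integral_centered_normal_scale2:
  fixes F :: "real \<Rightarrow> real \<Rightarrow> ennreal"
  assumes [measurable]: "case_prod F \<in> borel_measurable (borel \<Otimes>\<^sub>M borel)" and "v \<ge> 0"
  shows "(\<integral>\<^sup>+t. \<integral>\<^sup>+m. F t m \<partial>centered_normal (k\<^sup>2 * v) \<partial>centered_normal (h\<^sup>2 * v))
       = (\<integral>\<^sup>+x. \<integral>\<^sup>+y. F (h * x) (k * y) \<partial>centered_normal v \<partial>centered_normal v)"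
proof -
  have "(\<integral>\<^sup>+m. F t m \<partial>centered_normal (k\<^sup>2 * v)) = (\<integral>\<^sup>+y. F t (k * y) \<partial>centered_normal v)" for t
    using \<open>v \<ge> 0\<close> by (intro nn_integral_centered_normal_scale[symmetric]) measurable
  moreover have "(\<integral>\<^sup>+t. \<integral>\<^sup>+y. F t (k * y) \<partial>centered_normal v \<partial>centered_normal (h\<^sup>2 * v))
      = (\<integral>\<^sup>+x. \<integral>\<^sup>+y. F (h * x) (k * y) \<partial>centered_normal v \<partial>centered_normal v)"
    using \<open>v \<ge> 0\<close> by (intro nn_integral_centered_normal_scale[symmetric]) measurable
  ultimately show ?thesis
    by simp
qed

text \<open>Completing the square:
  \<open>u\<^sup>2/a + (x - u)\<^sup>2/b = x\<^sup>2/(a + b) + (u - a x/(a + b))\<^sup>2 (a + b)/(a b)\<close>.\<close>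

lemma normal_density_mult_normal_density:
  fixes a b x u :: real
  assumes a: "a > 0" and b: "b > 0"
  shows "normal_density 0 (sqrt a) u * normal_density 0 (sqrt b) (x - u)
       = normal_density 0 (sqrt (a + b)) x * normal_density 0 (sqrt (a * b / (a + b))) (u - a / (a + b) * x)"
proof -
  define s c where "s = a + b" and "c = a * b / (a + b)"
  have s: "s > 0" and c: "c > 0" and cs: "c * s = a * b"
    using a b by (simp_all add: s_def c_def)
  have density: "normal_density 0 (sqrt r) y = 1 / sqrt (2 * pi * r) * exp (- y\<^sup>2 / (2 * r))"
    if "r > 0" for r y
    using that by (simp add: normal_density_def)
  have exponent: "- u\<^sup>2 / (2 * a) + - (x - u)\<^sup>2 / (2 * b)
      = - x\<^sup>2 / (2 * s) + - (u - a / s * x)\<^sup>2 / (2 * c)"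
    using a b s unfolding c_def s_def[symmetric]
    by (simp add: field_simps power2_eq_square) (simp add: s_def algebra_simps)
  have norm: "sqrt (2 * pi * a) * sqrt (2 * pi * b) = sqrt (2 * pi * s) * sqrt (2 * pi * c)"
    by (simp add: real_sqrt_mult[symmetric] cs algebra_simps)
  have "normal_density 0 (sqrt a) u * normal_density 0 (sqrt b) (x - u)
      = 1 / (sqrt (2 * pi * a) * sqrt (2 * pi * b)) * exp (- u\<^sup>2 / (2 * a) + - (x - u)\<^sup>2 / (2 * b))"
    using a b by (simp add: density mult_exp_exp)
  also have "\<dots> = 1 / (sqrt (2 * pi * s) * sqrt (2 * pi * c))
      * exp (- x\<^sup>2 / (2 * s) + - (u - a / s * x)\<^sup>2 / (2 * c))"
    by (simp only: exponent norm)
  also have "\<dots> = normal_density 0 (sqrt s) x * normal_density 0 (sqrt c) (u - a / s * x)"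
    using s c by (simp add: density mult_exp_exp)
  finally show ?thesis by (simp add: s_def c_def)
qed

lemma nn_integral_centered_normal_shear_pos:
  fixes f :: "real \<Rightarrow> real \<Rightarrow> ennreal"
  assumes a: "a > 0" and b: "b > 0"
    and [measurable]: "case_prod f \<in> borel_measurable (borel \<Otimes>\<^sub>M borel)"
  shows "(\<integral>\<^sup>+u. \<integral>\<^sup>+v. f (u + v) u \<partial>centered_normal b \<partial>centered_normal a)
       = (\<integral>\<^sup>+t. \<integral>\<^sup>+r. f t (a / (a + b) * t + r) \<partial>centered_normal (a * b / (a + b)) \<partial>centered_normal (a + b))"
proof -
  define s c k where "s = a + b" and "c = a * b / (a + b)" and "k = a / (a + b)"
  have s: "s > 0" and c: "c > 0" using a b by (simp_all add: s_def c_def)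
  let ?n = "\<lambda>v x. ennreal (normal_density 0 (sqrt v) x)"
  have shift: "(\<integral>\<^sup>+x. g (y + x) \<partial>lborel) = (\<integral>\<^sup>+x. g x \<partial>lborel)"
    if [measurable]: "g \<in> borel_measurable borel" for g :: "real \<Rightarrow> ennreal" and y
    using nn_integral_real_affine[of g 1 y] by simp
  have inner_a: "(\<integral>\<^sup>+v. ?n b v * f (u + v) u \<partial>lborel) = (\<integral>\<^sup>+x. ?n b (x - u) * f x u \<partial>lborel)" for u
    using shift[of "\<lambda>x. ?n b (x - u) * f x u" u] by simp
  have inner_s: "(\<integral>\<^sup>+r. ?n c r * f t (k * t + r) \<partial>lborel) = (\<integral>\<^sup>+u. ?n c (u - k * t) * f t u \<partial>lborel)" for t
    using shift[of "\<lambda>u. ?n c (u - k * t) * f t u" "k * t"] by simp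
  have "(\<integral>\<^sup>+u. \<integral>\<^sup>+v. f (u + v) u \<partial>centered_normal b \<partial>centered_normal a)
      = (\<integral>\<^sup>+u. \<integral>\<^sup>+x. ?n a u * ?n b (x - u) * f x u \<partial>lborel \<partial>lborel)"
    using a b by (simp add: nn_integral_centered_normal inner_a nn_integral_cmult[symmetric] mult.assoc)
  also have "\<dots> = (\<integral>\<^sup>+x. \<integral>\<^sup>+u. ?n s x * ?n c (u - k * x) * f x u \<partial>lborel \<partial>lborel)"
    using normal_density_mult_normal_density[OF a b]
    by (subst lborel_pair.Fubini') (simp_all add: s_def c_def k_def ennreal_mult'[symmetric])
  also have "\<dots> = (\<integral>\<^sup>+t. \<integral>\<^sup>+r. f t (k * t + r) \<partial>centered_normal c \<partial>centered_normal s)"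
    using s c by (simp add: nn_integral_centered_normal inner_s nn_integral_cmult[symmetric] mult.assoc)
  finally show ?thesis by (simp add: s_def c_def k_def)
qed

lemma nn_integral_centered_normal_shear:
  fixes f :: "real \<Rightarrow> real \<Rightarrow> ennreal"
  assumes "a \<ge> 0" "b \<ge> 0"
    and [measurable]: "case_prod f \<in> borel_measurable (borel \<Otimes>\<^sub>M borel)"
  shows "(\<integral>\<^sup>+u. \<integral>\<^sup>+v. f (u + v) u \<partial>centered_normal b \<partial>centered_normal a)
       = (\<integral>\<^sup>+t. \<integral>\<^sup>+r. f t (a / (a + b) * t + r) \<partial>centered_normal (a * b / (a + b)) \<partial>centered_normal (a + b))"
proof (cases "a = 0 \<or> b = 0")
  case True
  then show ?thesis using assms by (cases "a = 0") (auto simp: nn_integral_centered_normal_0)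
next
  case False
  then show ?thesis using assms by (intro nn_integral_centered_normal_shear_pos) auto
qed

lemma nn_integral_centered_normal_add:
  assumes "a \<ge> 0" "b \<ge> 0" and [measurable]: "g \<in> borel_measurable borel"
  shows "(\<integral>\<^sup>+u. \<integral>\<^sup>+v. g (u + v) \<partial>centered_normal b \<partial>centered_normal a) = (\<integral>\<^sup>+t. g t \<partial>centered_normal (a + b))"
  using nn_integral_centered_normal_shear[OF assms(1,2), of "\<lambda>t u. g t"] by simp

text \<open>If \<open>U, P, Q\<close> are independent centred normals, then given \<open>U + P = t\<close> the variable \<open>U + Q\<close>
  is normal with mean \<open>\<alpha> t / (\<alpha> + \<beta>)\<close> and variance \<open>\<alpha> \<beta> / (\<alpha> + \<beta>) + \<gamma>\<close>.\<close>

lemma nn_integral_centered_normal_common_summand: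
  fixes f g :: "real \<Rightarrow> ennreal"
  assumes "\<alpha> \<ge> 0" "\<beta> \<ge> 0" "\<gamma> \<ge> 0"
    and [measurable]: "f \<in> borel_measurable borel" "g \<in> borel_measurable borel"
  shows "(\<integral>\<^sup>+u. \<integral>\<^sup>+p. \<integral>\<^sup>+q. f (u + p) * g (u + q)
            \<partial>centered_normal \<gamma> \<partial>centered_normal \<beta> \<partial>centered_normal \<alpha>)
       = (\<integral>\<^sup>+t. f t * (\<integral>\<^sup>+m. g (\<alpha> / (\<alpha> + \<beta>) * t + m)
            \<partial>centered_normal (\<alpha> * \<beta> / (\<alpha> + \<beta>) + \<gamma>)) \<partial>centered_normal (\<alpha> + \<beta>))"
proof -
  define \<phi> where "\<phi> u = (\<integral>\<^sup>+q. g (u + q) \<partial>centered_normal \<gamma>)" for u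
  have [measurable]: "\<phi> \<in> borel_measurable borel"
    unfolding \<phi>_def by measurable
  have \<phi>_shift: "(\<integral>\<^sup>+r. \<phi> (x + r) \<partial>centered_normal (\<alpha> * \<beta> / (\<alpha> + \<beta>)))
      = (\<integral>\<^sup>+m. g (x + m) \<partial>centered_normal (\<alpha> * \<beta> / (\<alpha> + \<beta>) + \<gamma>))" for x
    unfolding \<phi>_def add.assoc using assms
    by (intro nn_integral_centered_normal_add) auto
  have "(\<integral>\<^sup>+u. \<integral>\<^sup>+p. \<integral>\<^sup>+q. f (u + p) * g (u + q)
            \<partial>centered_normal \<gamma> \<partial>centered_normal \<beta> \<partial>centered_normal \<alpha>)
      = (\<integral>\<^sup>+u. \<integral>\<^sup>+p. f (u + p) * \<phi> u \<partial>centered_normal \<beta> \<partial>centered_normal \<alpha>)"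
    unfolding \<phi>_def by (simp add: nn_integral_cmult)
  also have "\<dots> = (\<integral>\<^sup>+t. \<integral>\<^sup>+r. f t * \<phi> (\<alpha> / (\<alpha> + \<beta>) * t + r)
            \<partial>centered_normal (\<alpha> * \<beta> / (\<alpha> + \<beta>)) \<partial>centered_normal (\<alpha> + \<beta>))"
    using assms by (intro nn_integral_centered_normal_shear[where f = "\<lambda>t u. f t * \<phi> u"]) auto
  also have "\<dots> = (\<integral>\<^sup>+t. f t * (\<integral>\<^sup>+m. g (\<alpha> / (\<alpha> + \<beta>) * t + m)
            \<partial>centered_normal (\<alpha> * \<beta> / (\<alpha> + \<beta>) + \<gamma>)) \<partial>centered_normal (\<alpha> + \<beta>))"
    by (simp add: nn_integral_cmult \<phi>_shift)
  finally show ?thesis .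
qed

lemma neg_sqrt_mult_gt_neg_iff:
  fixes D x :: real
  assumes "D > 0"
  shows "- sqrt D * x > - D \<longleftrightarrow> x < sqrt D"
proof -
  have "- sqrt D * x > - D \<longleftrightarrow> sqrt D * x < sqrt D * sqrt D"
    using assms by simp
  also have "\<dots> \<longleftrightarrow> x < sqrt D"
    using assms by (intro mult_less_cancel_left_pos) simp
  finally show ?thesis .
qed

lemma residual_variance_eq:
  fixes a b w c s :: real
  assumes "a + b > 0" "a + w > 0" and c: "c = a / sqrt ((a + b) * (a + w))" and s: "s\<^sup>2 = 1 - c\<^sup>2"
  shows "a * b / (a + b) + w = (a + w) * s\<^sup>2"
proof -
  have square: "(sqrt ((a + b) * (a + w)))\<^sup>2 = (a + b) * (a + w)"
    using assms by (intro real_sqrt_pow2) simp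
  have "(a + w) * s\<^sup>2 = (a + w) * (1 - a\<^sup>2 / ((a + b) * (a + w)))"
    unfolding s c power_divide square ..
  also have "\<dots> = (a + w) - a\<^sup>2 / (a + b)"
    using assms(1,2) by (simp add: right_diff_distrib)
  also have "\<dots> = a * b / (a + b) + w"
    using assms(1,2) by (simp add: field_simps power2_eq_square)
  finally show ?thesis ..
qed

lemma nn_integral_centered_normal_two_thresholds:
  fixes a b w v c s :: real
  assumes "a \<ge> 0" "b \<ge> 0" "w \<ge> 0" "a + b > 0" "a + w > 0" "v > 0"
    and c: "c = a / sqrt ((a + b) * (a + w))" and s: "s \<ge> 0" "s\<^sup>2 = 1 - c\<^sup>2"
  shows "(\<integral>\<^sup>+u. \<integral>\<^sup>+p. \<integral>\<^sup>+q. indicator {x. - (a + b) < x} (u + p) * indicator {x. - (a + w) < x} (u + q)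
            \<partial>centered_normal (w * v) \<partial>centered_normal (b * v) \<partial>centered_normal (a * v))
       = (\<integral>\<^sup>+x. \<integral>\<^sup>+y. indicator {(x, y). x < sqrt (a + b) \<and> x * c + y * s < sqrt (a + w)} (x, y)
            \<partial>centered_normal v \<partial>centered_normal v)"
proof -
  define D E where "D = a + b" and "E = a + w"
  have D: "D > 0" and E: "E > 0" using assms by (simp_all add: D_def E_def)
  have total: "a * v + b * v = (- sqrt D)\<^sup>2 * v"
    using D by (simp add: D_def algebra_simps)
  have mean: "a * v / (a * v + b * v) = a / D"
    using D \<open>v > 0\<close> by (simp add: D_def flip: distrib_right)
  have variance: "a * v * (b * v) / (a * v + b * v) + w * v = (- sqrt E * s)\<^sup>2 * v"
  proof -
    have "a * v + b * v \<noteq> 0"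
      using \<open>v > 0\<close> \<open>a + b > 0\<close> by (metis distrib_right mult_pos_pos less_irrefl)
    then have "a * v * (b * v) / (a * v + b * v) + w * v = (a * b / (a + b) + w) * v"
      using \<open>v > 0\<close> \<open>a + b > 0\<close> by (simp add: field_simps)
    also have "\<dots> = (- sqrt E * s)\<^sup>2 * v"
      using residual_variance_eq[OF assms(4,5) c s(2)] E by (simp add: E_def power_mult_distrib)
    finally show ?thesis .
  qed
  have halfplane: "a / D * (- sqrt D * x) + - sqrt E * s * y = - sqrt E * (x * c + y * s)" for x y
  proof -
    have "sqrt E * c = a / sqrt D"
      using E by (simp add: c D_def E_def real_sqrt_mult)
    moreover have "a / D * sqrt D = a / sqrt D"
      using D by (simp add: field_simps)
    ultimately have "a / D * sqrt D = sqrt E * c"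
      by simp
    then show ?thesis by (simp add: algebra_simps)
  qed
  let ?G = "\<lambda>t m. indicator {x. - D < x} t * indicator {x. - E < x} (a / D * t + m) :: ennreal"
  have "(\<integral>\<^sup>+u. \<integral>\<^sup>+p. \<integral>\<^sup>+q. indicator {x. - (a + b) < x} (u + p) * indicator {x. - (a + w) < x} (u + q)
            \<partial>centered_normal (w * v) \<partial>centered_normal (b * v) \<partial>centered_normal (a * v))
      = (\<integral>\<^sup>+t. \<integral>\<^sup>+m. ?G t m \<partial>centered_normal ((- sqrt E * s)\<^sup>2 * v) \<partial>centered_normal ((- sqrt D)\<^sup>2 * v))"
    using nn_integral_centered_normal_common_summand[of "a * v" "b * v" "w * v"
        "indicator {x. - D < x}" "indicator {x. - E < x}", unfolded mean variance, unfolded total]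
      assms by (simp add: D_def E_def nn_integral_cmult)
  also have "\<dots> = (\<integral>\<^sup>+x. \<integral>\<^sup>+y. ?G (- sqrt D * x) (- sqrt E * s * y) \<partial>centered_normal v \<partial>centered_normal v)"
    using \<open>v > 0\<close> by (intro nn_integral_centered_normal_scale2) auto
  also have "\<dots> = (\<integral>\<^sup>+x. \<integral>\<^sup>+y. indicator {(x, y). x < sqrt D \<and> x * c + y * s < sqrt E} (x, y)
            \<partial>centered_normal v \<partial>centered_normal v)"
    unfolding halfplane
    using neg_sqrt_mult_gt_neg_iff[OF D] neg_sqrt_mult_gt_neg_iff[OF E] by (simp add: indicator_def of_bool_conj)
  finally show ?thesis by (simp add: D_def E_def)
qed

section \<open>Sums over blocks of i.i.d. normal coordinates\<close>

abbreviation iid_normal :: "'i set \<Rightarrow> real \<Rightarrow> ('i \<Rightarrow> real) measure" where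
  "iid_normal I v \<equiv> Pi\<^sub>M I (\<lambda>_. centered_normal v)"

lemma awgn_noise_eq_iid_normal: "\<sigma> > 0 \<Longrightarrow> awgn_noise n \<sigma> = iid_normal {..<n} (\<sigma>\<^sup>2)"
  by (simp add: awgn_noise_def centered_normal_def)

lemma prob_space_iid_normal: "prob_space (iid_normal I v)"
  by (intro prob_space_PiM prob_space_centered_normal)

lemma product_sigma_finite_centered_normal: "product_sigma_finite (\<lambda>_. centered_normal v)"
  unfolding product_sigma_finite_def
  using prob_space_imp_sigma_finite[OF prob_space_centered_normal] by blast

lemma borel_measurable_sum_iid_normal:
  assumes "S \<subseteq> I"
  shows "(\<lambda>z. \<Sum>k\<in>S. z k) \<in> borel_measurable (iid_normal I v)"
proof (rule borel_measurable_sum)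
  fix k assume "k \<in> S"
  then have "(\<lambda>z. z k) \<in> iid_normal I v \<rightarrow>\<^sub>M centered_normal v"
    using assms by (intro measurable_component_singleton) auto
  then show "(\<lambda>z. z k) \<in> borel_measurable (iid_normal I v)"
    by (simp cong: measurable_cong_sets)
qed

lemma nn_integral_iid_normal_sum:
  assumes "finite S" "v \<ge> 0" and "g \<in> borel_measurable borel"
  shows "(\<integral>\<^sup>+z. g (\<Sum>k\<in>S. z k) \<partial>iid_normal S v) = (\<integral>\<^sup>+t. g t \<partial>centered_normal (real (card S) * v))"
  using assms(1,3)
proof (induction S arbitrary: g rule: finite_induct)
  case empty
  then show ?case
    by (simp add: nn_integral_centered_normal_0 product_sigma_finite.nn_integral_empty
        product_sigma_finite_centered_normal prob_space.emeasure_space_1[OF prob_space_iid_normal])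
next
  case (insert j S)
  interpret product_sigma_finite "\<lambda>_. centered_normal v"
    by (rule product_sigma_finite_centered_normal)
  note [measurable] = insert.prems
  have sum_upd: "(\<Sum>k\<in>insert j S. (z(j := y)) k) = y + (\<Sum>k\<in>S. z k)" for z y
  proof -
    have "(\<Sum>k\<in>S. (z(j := y)) k) = (\<Sum>k\<in>S. z k)"
      using insert.hyps by (intro sum.cong) auto
    then show ?thesis
      using insert.hyps by simp
  qed
  have "(\<integral>\<^sup>+z. g (\<Sum>k\<in>insert j S. z k) \<partial>iid_normal (insert j S) v)
      = (\<integral>\<^sup>+y. \<integral>\<^sup>+z. g (y + (\<Sum>k\<in>S. z k)) \<partial>iid_normal S v \<partial>centered_normal v)"
    unfolding sum_upd[symmetric] using insert.hyps by (intro product_nn_integral_insert_rev) auto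
  also have "\<dots> = (\<integral>\<^sup>+y. \<integral>\<^sup>+t. g (y + t) \<partial>centered_normal (real (card S) * v) \<partial>centered_normal v)"
    by (intro nn_integral_cong insert.IH) simp
  also have "\<dots> = (\<integral>\<^sup>+t. g t \<partial>centered_normal (real (card (insert j S)) * v))"
    using insert.hyps \<open>v \<ge> 0\<close> by (subst nn_integral_centered_normal_add) (auto simp: algebra_simps)
  finally show ?case .
qed

lemma nn_integral_iid_normal_split_sum:
  fixes g :: "real \<Rightarrow> ('i \<Rightarrow> real) \<Rightarrow> ennreal"
  assumes "finite I" "S \<subseteq> I" "v \<ge> 0"
    and g: "case_prod g \<in> borel_measurable (borel \<Otimes>\<^sub>M iid_normal (I - S) v)"
  shows "(\<integral>\<^sup>+z. g (\<Sum>k\<in>S. z k) (restrict z (I - S)) \<partial>iid_normal I v)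
       = (\<integral>\<^sup>+u. \<integral>\<^sup>+y. g u y \<partial>iid_normal (I - S) v \<partial>centered_normal (real (card S) * v))"
proof -
  interpret product_sigma_finite "\<lambda>_. centered_normal v"
    by (rule product_sigma_finite_centered_normal)
  interpret rest: prob_space "iid_normal (I - S) v"
    by (rule prob_space_iid_normal)
  have S: "finite S"
    using assms(1,2) finite_subset by auto
  have [measurable]: "(\<lambda>z. \<Sum>k\<in>S. z k) \<in> borel_measurable (iid_normal I v)"
    using assms(2) by (rule borel_measurable_sum_iid_normal)
  have "(\<lambda>z. (\<Sum>k\<in>S. z k, restrict z (I - S))) \<in> iid_normal I v \<rightarrow>\<^sub>M borel \<Otimes>\<^sub>M iid_normal (I - S) v"
    by (intro measurable_Pair measurable_restrict_subset) auto
  from measurable_compose[OF this g]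
  have [measurable]: "(\<lambda>z. g (\<Sum>k\<in>S. z k) (restrict z (I - S))) \<in> borel_measurable (iid_normal I v)"
    by simp
  have [measurable]: "(\<lambda>u. \<integral>\<^sup>+y. g u y \<partial>iid_normal (I - S) v) \<in> borel_measurable borel"
    using g by (rule rest.borel_measurable_nn_integral)
  have "(\<integral>\<^sup>+z. g (\<Sum>k\<in>S. z k) (restrict z (I - S)) \<partial>iid_normal I v)
      = (\<integral>\<^sup>+x. \<integral>\<^sup>+y. g (\<Sum>k\<in>S. merge S (I - S) (x, y) k) (restrict (merge S (I - S) (x, y)) (I - S))
           \<partial>iid_normal (I - S) v \<partial>iid_normal S v)"
    using product_nn_integral_fold[of S "I - S" "\<lambda>z. g (\<Sum>k\<in>S. z k) (restrict z (I - S))"]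
      S assms(1,2) by (simp add: Un_absorb1)
  also have "\<dots> = (\<integral>\<^sup>+x. \<integral>\<^sup>+y. g (\<Sum>k\<in>S. x k) y \<partial>iid_normal (I - S) v \<partial>iid_normal S v)"
    by (intro nn_integral_cong arg_cong2[where f = g] sum.cong) (auto simp: space_PiM)
  also have "\<dots> = (\<integral>\<^sup>+u. \<integral>\<^sup>+y. g u y \<partial>iid_normal (I - S) v \<partial>centered_normal (real (card S) * v))"
    using S assms(3) by (rule nn_integral_iid_normal_sum) measurable
  finally show ?thesis .
qed

lemma nn_integral_iid_normal_three_block_sums:
  fixes h :: "real \<Rightarrow> real \<Rightarrow> real \<Rightarrow> ennreal"
  assumes "finite I" "S1 \<subseteq> I" "S2 \<subseteq> I" "S3 \<subseteq> I"
    and "S1 \<inter> S2 = {}" "S1 \<inter> S3 = {}" "S2 \<inter> S3 = {}" and "v \<ge> 0"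
    and h: "(\<lambda>(u, p, q). h u p q) \<in> borel_measurable (borel \<Otimes>\<^sub>M borel \<Otimes>\<^sub>M borel)"
  shows "(\<integral>\<^sup>+z. h (\<Sum>k\<in>S1. z k) (\<Sum>k\<in>S2. z k) (\<Sum>k\<in>S3. z k) \<partial>iid_normal I v)
       = (\<integral>\<^sup>+u. \<integral>\<^sup>+p. \<integral>\<^sup>+q. h u p q \<partial>centered_normal (real (card S3) * v)
            \<partial>centered_normal (real (card S2) * v) \<partial>centered_normal (real (card S1) * v))"
proof -
  define J K where "J = I - S1" and "K = I - S1 - S2"
  have J: "finite J" "S2 \<subseteq> J" "S3 \<subseteq> J" "J - S2 = K" and K: "finite K" "S3 \<subseteq> K"
    using assms by (auto simp: J_def K_def)
  have h_comp: "(\<lambda>x. h (f x) (g x) (k x)) \<in> borel_measurable M"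
    if "f \<in> borel_measurable M" "g \<in> borel_measurable M" "k \<in> borel_measurable M" for M f g k
    using measurable_compose[OF measurable_Pair[OF that(1) measurable_Pair[OF that(2,3)]] h] by simp
  have sum_snd: "(\<lambda>x. \<Sum>k\<in>S. snd x k) \<in> borel_measurable (borel \<Otimes>\<^sub>M iid_normal L v)"
    if "S \<subseteq> L" for S L
    using measurable_compose[OF measurable_snd borel_measurable_sum_iid_normal[OF that]] .
  have restrict_sum: "(\<Sum>k\<in>S. restrict z L k) = (\<Sum>k\<in>S. z k)" if "S \<subseteq> L" for S L and z :: "'a \<Rightarrow> real"
    using that by (intro sum.cong) auto
  have inner: "(\<integral>\<^sup>+y. h u p (\<Sum>k\<in>S3. y k) \<partial>iid_normal K v)
      = (\<integral>\<^sup>+q. h u p q \<partial>centered_normal (real (card S3) * v))" for u p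
  proof -
    have "(\<lambda>x. h u p (fst x)) \<in> borel_measurable (borel \<Otimes>\<^sub>M iid_normal (K - S3) v)"
      by (intro h_comp) measurable
    then show ?thesis
      using nn_integral_iid_normal_split_sum[OF K \<open>v \<ge> 0\<close>, of "\<lambda>q y. h u p q"]
      by (simp add: case_prod_beta' prob_space.emeasure_space_1[OF prob_space_iid_normal])
  qed
  have middle: "(\<integral>\<^sup>+y. h u (\<Sum>k\<in>S2. y k) (\<Sum>k\<in>S3. y k) \<partial>iid_normal J v)
      = (\<integral>\<^sup>+p. \<integral>\<^sup>+q. h u p q \<partial>centered_normal (real (card S3) * v)
            \<partial>centered_normal (real (card S2) * v))" for u
  proof -
    have "(\<lambda>x. h u (fst x) (\<Sum>k\<in>S3. snd x k)) \<in> borel_measurable (borel \<Otimes>\<^sub>M iid_normal K v)"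
      using K(2) by (intro h_comp sum_snd) measurable
    then show ?thesis
      using nn_integral_iid_normal_split_sum[OF J(1,2) \<open>v \<ge> 0\<close>, of "\<lambda>p y. h u p (\<Sum>k\<in>S3. y k)"]
      by (simp add: case_prod_beta' J(4) K restrict_sum inner del: restrict_apply)
  qed
  have "(\<lambda>x. h (fst x) (\<Sum>k\<in>S2. snd x k) (\<Sum>k\<in>S3. snd x k)) \<in> borel_measurable (borel \<Otimes>\<^sub>M iid_normal J v)"
    using J(2,3) by (intro h_comp sum_snd) measurable
  then show ?thesis
    using nn_integral_iid_normal_split_sum[OF assms(1,2,8), of "\<lambda>u y. h u (\<Sum>k\<in>S2. y k) (\<Sum>k\<in>S3. y k)"]
    by (simp add: case_prod_beta' J_def[symmetric] J restrict_sum middle del: restrict_apply)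
qed

lemma emeasure_iid_normal_block_sums_gt:
  fixes A B :: "'i set"
  assumes I: "finite I" "A \<subseteq> I" "B \<subseteq> I" and "A \<noteq> {}" "B \<noteq> {}" "v > 0"
    and c: "c = real (card (A \<inter> B)) / sqrt (real (card A) * real (card B))"
    and s: "s \<ge> 0" "s\<^sup>2 = 1 - c\<^sup>2"
  shows "emeasure (iid_normal I v)
           {z \<in> space (iid_normal I v). - real (card A) < (\<Sum>k\<in>A. z k) \<and> - real (card B) < (\<Sum>k\<in>B. z k)}
       = (\<integral>\<^sup>+x. \<integral>\<^sup>+y.
               indicator {(x, y). x < sqrt (real (card A)) \<and> x * c + y * s < sqrt (real (card B))} (x, y)
             \<partial>centered_normal v \<partial>centered_normal v)"
proof -
  define a b w where "a = card (A \<inter> B)" and "b = card (A - B)" and "w = card (B - A)"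
  have fin: "finite A" "finite B"
    using I finite_subset by auto
  have card: "card A = a + b" "card B = a + w"
    using card_Int_Diff[OF fin(1), of B] card_Int_Diff[OF fin(2), of A]
    by (simp_all add: a_def b_def w_def Int_commute)
  have "card A > 0" "card B > 0"
    using fin \<open>A \<noteq> {}\<close> \<open>B \<noteq> {}\<close> by auto
  then have pos: "real a + real b > 0" "real a + real w > 0"
    by (auto simp: card)
  have sum_split: "(\<Sum>k\<in>A. z k) = (\<Sum>k\<in>A \<inter> B. z k) + (\<Sum>k\<in>A - B. z k)"
      "(\<Sum>k\<in>B. z k) = (\<Sum>k\<in>A \<inter> B. z k) + (\<Sum>k\<in>B - A. z k)" for z :: "'i \<Rightarrow> real"
    using sum.Int_Diff[OF fin(1), of z B] sum.Int_Diff[OF fin(2), of z A]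
    by (simp_all add: Int_commute)
  have [measurable]: "(\<lambda>z. \<Sum>k\<in>A. z k) \<in> borel_measurable (iid_normal I v)"
      "(\<lambda>z. \<Sum>k\<in>B. z k) \<in> borel_measurable (iid_normal I v)"
    using I by (simp_all add: borel_measurable_sum_iid_normal)
  have "emeasure (iid_normal I v)
      {z \<in> space (iid_normal I v). - real (card A) < (\<Sum>k\<in>A. z k) \<and> - real (card B) < (\<Sum>k\<in>B. z k)}
    = (\<integral>\<^sup>+z. indicator {x. - (real a + real b) < x} ((\<Sum>k\<in>A \<inter> B. z k) + (\<Sum>k\<in>A - B. z k))
      * indicator {x. - (real a + real w) < x} ((\<Sum>k\<in>A \<inter> B. z k) + (\<Sum>k\<in>B - A. z k)) \<partial>iid_normal I v)"
    by (subst nn_integral_indicator[symmetric])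
      (measurable, auto simp: card sum_split indicator_def intro!: nn_integral_cong)
  also have "\<dots> = (\<integral>\<^sup>+u. \<integral>\<^sup>+p. \<integral>\<^sup>+q. indicator {x. - (real a + real b) < x} (u + p)
      * indicator {x. - (real a + real w) < x} (u + q)
      \<partial>centered_normal (real w * v) \<partial>centered_normal (real b * v) \<partial>centered_normal (real a * v))"
    unfolding a_def b_def w_def using I \<open>v > 0\<close>
    by (intro nn_integral_iid_normal_three_block_sums) (auto, measurable)
  also have "\<dots> = (\<integral>\<^sup>+x. \<integral>\<^sup>+y.
               indicator {(x, y). x < sqrt (real (card A)) \<and> x * c + y * s < sqrt (real (card B))} (x, y)
             \<partial>centered_normal v \<partial>centered_normal v)"
    using pos \<open>v > 0\<close> s c
    by (subst nn_integral_centered_normal_two_thresholds) (auto simp: card a_def)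
  finally show ?thesis .
qed

lemma measure_iid_normal_block_sums_le:
  fixes A B :: "'i set"
  assumes "finite I" "A \<subseteq> I" "B \<subseteq> I" and "A \<noteq> {}" "B \<noteq> {}" "v > 0"
    and "c = real (card (A \<inter> B)) / sqrt (real (card A) * real (card B))"
    and "s \<ge> 0" "s\<^sup>2 = 1 - c\<^sup>2"
  shows "measure (iid_normal I v)
           {z \<in> space (iid_normal I v). (\<Sum>k\<in>A. z k) \<le> - real (card A) \<or> (\<Sum>k\<in>B. z k) \<le> - real (card B)}
       = 1 - enn2real (\<integral>\<^sup>+x. \<integral>\<^sup>+y.
               indicator {(x, y). x < sqrt (real (card A)) \<and> x * c + y * s < sqrt (real (card B))} (x, y)
             \<partial>centered_normal v \<partial>centered_normal v)"
proof -
  interpret prob_space "iid_normal I v"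
    by (rule prob_space_iid_normal)
  define F where "F = {z \<in> space (iid_normal I v).
      - real (card A) < (\<Sum>k\<in>A. z k) \<and> - real (card B) < (\<Sum>k\<in>B. z k)}"
  have [measurable]: "(\<lambda>z. \<Sum>k\<in>A. z k) \<in> borel_measurable (iid_normal I v)"
      "(\<lambda>z. \<Sum>k\<in>B. z k) \<in> borel_measurable (iid_normal I v)"
    using assms(2,3) by (simp_all add: borel_measurable_sum_iid_normal)
  have "F \<in> events"
    unfolding F_def by measurable
  moreover have "{z \<in> space (iid_normal I v). (\<Sum>k\<in>A. z k) \<le> - real (card A) \<or> (\<Sum>k\<in>B. z k) \<le> - real (card B)}
      = space (iid_normal I v) - F"
    by (auto simp: F_def)
  ultimately have "measure (iid_normal I v)
      {z \<in> space (iid_normal I v). (\<Sum>k\<in>A. z k) \<le> - real (card A) \<or> (\<Sum>k\<in>B. z k) \<le> - real (card B)}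
    = 1 - enn2real (emeasure (iid_normal I v) F)"
    by (simp add: prob_compl measure_def[of _ F])
  then show ?thesis
    unfolding F_def emeasure_iid_normal_block_sums_gt[OF assms] .
qed

lemma integral_indicator_gauss_pdf_pair:
  fixes \<Omega> :: "(real \<times> real) set"
  assumes "\<sigma> > 0" and \<Omega>: "\<Omega> \<in> sets borel"
  shows "integral\<^sup>L lborel (\<lambda>\<xi>. indicator \<Omega> \<xi> * gauss_pdf \<sigma> (fst \<xi>) * gauss_pdf \<sigma> (snd \<xi>))
       = enn2real (\<integral>\<^sup>+x. \<integral>\<^sup>+y. indicator \<Omega> (x, y) \<partial>centered_normal (\<sigma>\<^sup>2) \<partial>centered_normal (\<sigma>\<^sup>2))"
proof -
  have gauss: "gauss_pdf \<sigma> = normal_density 0 (sqrt (\<sigma>\<^sup>2))"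
    using \<open>\<sigma> > 0\<close> by (simp add: fun_eq_iff gauss_pdf_def normal_density_def real_sqrt_mult)
  have [measurable]: "\<Omega> \<in> sets (borel \<Otimes>\<^sub>M borel)"
    unfolding borel_prod by (fact \<Omega>)
  have "integral\<^sup>L lborel (\<lambda>\<xi>. indicator \<Omega> \<xi> * gauss_pdf \<sigma> (fst \<xi>) * gauss_pdf \<sigma> (snd \<xi>))
      = enn2real (\<integral>\<^sup>+\<xi>. ennreal (indicator \<Omega> \<xi> * gauss_pdf \<sigma> (fst \<xi>) * gauss_pdf \<sigma> (snd \<xi>)) \<partial>lborel)"
  proof (rule integral_eq_nn_integral)
    have "(\<lambda>\<xi>. indicator \<Omega> \<xi> * gauss_pdf \<sigma> (fst \<xi>) * gauss_pdf \<sigma> (snd \<xi>))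
        \<in> borel_measurable (borel \<Otimes>\<^sub>M borel)"
      unfolding gauss by measurable
    then show "(\<lambda>\<xi>. indicator \<Omega> \<xi> * gauss_pdf \<sigma> (fst \<xi>) * gauss_pdf \<sigma> (snd \<xi>)) \<in> borel_measurable lborel"
      unfolding borel_prod by simp
  qed (simp add: gauss)
  also have "(\<integral>\<^sup>+\<xi>. ennreal (indicator \<Omega> \<xi> * gauss_pdf \<sigma> (fst \<xi>) * gauss_pdf \<sigma> (snd \<xi>)) \<partial>lborel)
      = (\<integral>\<^sup>+x. \<integral>\<^sup>+y. ennreal (indicator \<Omega> (x, y) * gauss_pdf \<sigma> x * gauss_pdf \<sigma> y) \<partial>lborel \<partial>lborel)"
    by (subst lborel_prod[symmetric], subst lborel.nn_integral_fst[symmetric]) (simp_all add: gauss)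
  also have "\<dots> = (\<integral>\<^sup>+x. \<integral>\<^sup>+y. indicator \<Omega> (x, y) \<partial>centered_normal (\<sigma>\<^sup>2) \<partial>centered_normal (\<sigma>\<^sup>2))"
    using \<open>\<sigma> > 0\<close>
    by (simp add: nn_integral_centered_normal gauss ennreal_mult' ennreal_indicator nn_integral_cmult[symmetric] mult_ac)
  finally show ?thesis .
qed

section \<open>Binary codes and BPSK\<close>

definition support :: "bool list \<Rightarrow> nat set" where
  "support c = {k. k < length c \<and> c ! k}"

lemma hamming_weight_eq_card_support: "hamming_weight c = card (support c)"
  by (simp add: hamming_weight_def support_def)

lemma support_subset: "support c \<subseteq> {..<length c}"
  by (auto simp: support_def)

lemma support_eq_empty_iff: "support c = {} \<longleftrightarrow> c = replicate (length c) False"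
  by (auto simp: support_def list_eq_iff_nth_eq)

lemma support_gf2_diff:
  "length a = length b \<Longrightarrow> support (gf2_diff a b) = (support a - support b) \<union> (support b - support a)"
  by (auto simp: support_def gf2_diff_def)

lemma card_add_card_eq_card_sym_diff:
  assumes "finite A" "finite B"
  shows "card A + card B = 2 * card (A \<inter> B) + card ((A - B) \<union> (B - A))"
proof -
  have "card ((A - B) \<union> (B - A)) = card (A - B) + card (B - A)"
    using assms by (intro card_Un_disjoint) auto
  then show ?thesis
    using card_Int_Diff[OF assms(1), of B] card_Int_Diff[OF assms(2), of A]
    by (simp add: Int_commute)
qed

lemma hamming_weight_gf2_diff:
  assumes "length a = length b"
  shows "real (hamming_weight a) + real (hamming_weight b) - real (hamming_weight (gf2_diff a b))
       = 2 * real (card (support a \<inter> support b))"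
  using card_add_card_eq_card_sym_diff[of "support a" "support b"] assms
    finite_subset[OF support_subset]
  by (simp add: hamming_weight_eq_card_support support_gf2_diff flip: of_nat_add of_nat_mult)

lemma pw_error_from_zero_iff:
  fixes z :: "nat \<Rightarrow> real"
  assumes "length c = n"
  shows "pw_error n (bpsk (replicate n False)) (bpsk c) (\<lambda>k. bpsk (replicate n False) k + z k)
     \<longleftrightarrow> (\<Sum>k\<in>support c. z k) \<le> - real (card (support c))"
proof -
  let ?s0 = "bpsk (replicate n False)"
  have "sqdist n (\<lambda>k. ?s0 k + z k) (bpsk c) = (\<Sum>k<n. (z k)\<^sup>2 + (if k \<in> support c then 4 * z k + 4 else 0))"
    unfolding sqdist_def using assms
    by (intro sum.cong) (auto simp: support_def bpsk_def power2_eq_square algebra_simps)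
  also have "\<dots> = (\<Sum>k<n. (z k)\<^sup>2) + (\<Sum>k\<in>support c. 4 * z k + 4)"
    using support_subset[of c] assms by (simp add: sum.distrib sum.If_cases Int_absorb1)
  finally have "sqdist n (\<lambda>k. ?s0 k + z k) (bpsk c)
      = sqdist n (\<lambda>k. ?s0 k + z k) ?s0 + 4 * (\<Sum>k\<in>support c. z k) + 4 * real (card (support c))"
    by (simp add: sqdist_def bpsk_def sum.distrib sum_distrib_left)
  then show ?thesis
    unfolding pw_error_def real_sqrt_le_iff by linarith
qed

theorem lemma1:
  fixes n :: nat and C :: "bool list set" and c1 c :: "bool list"
    and \<sigma> \<theta> :: real
  assumes code: "binary_linear_code n C"
    and c1C: "c1 \<in> C" and cC: "c \<in> C"
    and dist01: "c1 \<noteq> replicate n False" and dist0: "c \<noteq> replicate n False"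
    and dist1: "c \<noteq> c1"
    and sigma: "\<sigma> > 0"
    and theta: "0 \<le> \<theta>" "\<theta> \<le> pi"
    and cos_theta: "cos \<theta> = (real (hamming_weight c1) + real (hamming_weight c)
                      - real (hamming_weight (gf2_diff c c1)))
                     / (2 * sqrt (real (hamming_weight c1) * real (hamming_weight c)))"
  shows "measure (awgn_noise n \<sigma>)
           {z \<in> space (awgn_noise n \<sigma>).
              let s0 = bpsk (replicate n False); y = (\<lambda>k. s0 k + z k) in
              pw_error n s0 (bpsk c1) y \<or> pw_error n s0 (bpsk c) y}
         = 1 - integral\<^sup>L lborel
               (\<lambda>\<xi>::real \<times> real.
                  indicator {(\<xi>1, \<xi>2). \<xi>1 < sqrt (real (hamming_weight c1)) \<and>
                                      \<xi>1 * cos \<theta> + \<xi>2 * sin \<theta> < sqrt (real (hamming_weight c))} \<xi>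
                  * gauss_pdf \<sigma> (fst \<xi>) * gauss_pdf \<sigma> (snd \<xi>))"
proof -
  have len: "length c1 = n" "length c = n"
    using code c1C cC by (auto simp: binary_linear_code_def)
  have nonempty: "support c1 \<noteq> {}" "support c \<noteq> {}"
    using dist01 dist0 len by (simp_all add: support_eq_empty_iff)
  have "real (hamming_weight c1) + real (hamming_weight c) - real (hamming_weight (gf2_diff c c1))
      = 2 * real (card (support c1 \<inter> support c))"
    using hamming_weight_gf2_diff[of c c1] len by (simp add: Int_commute)
  then have cos: "cos \<theta> = real (card (support c1 \<inter> support c))
      / sqrt (real (card (support c1)) * real (card (support c)))"
    using cos_theta by (simp add: hamming_weight_eq_card_support)
  have sin: "sin \<theta> \<ge> 0" "(sin \<theta>)\<^sup>2 = 1 - (cos \<theta>)\<^sup>2"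
    using theta by (simp_all add: sin_ge_zero sin_squared_eq)
  have "open {(\<xi>1, \<xi>2). \<xi>1 < sqrt (real (card (support c1))) \<and>
      \<xi>1 * cos \<theta> + \<xi>2 * sin \<theta> < sqrt (real (card (support c)))}"
    unfolding case_prod_beta' by (intro open_Collect_conj open_Collect_less continuous_intros)
  then show ?thesis
    using measure_iid_normal_block_sums_le[OF _ support_subset[of c1, unfolded len(1)]
        support_subset[of c, unfolded len(2)] nonempty _ cos sin]
      integral_indicator_gauss_pdf_pair[OF sigma borel_open] sigma
    by (simp add: awgn_noise_eq_iid_normal Let_def pw_error_from_zero_iff len hamming_weight_eq_card_support)
qed

end
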